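(* Let $1\le n\le L$ and $I\subseteq\{1,\dots,n\}$. The set $\Omega^I_{L,n}$ is stable under the dynamics on $\Omega_{L,n}$ from which the transitions (T3) and (T4) with $k\in I$ are excluded: if $w\in\Omega^I_{L,n}$ and $w\to w'$ is a transition of type (T1) or (T2) (any $k$), or of type (T3) or (T4) with $k\notin I$, then $w'\in\Omega^I_{L,n}$.
   Context: Particle labels are taken modulo $n$, positions modulo $L$. $\Omega_{L,n}$ is the set of words $w_1\cdots w_L$ on the ring $\mathbb{Z}/L\mathbb{Z}$ over the alphabet $\{\bullet_1,\dots,\bullet_n,\Box_1,\dots,\Box_n\}$ in which each $\bullet_k$ occurs exactly once, the $\bullet_1,\dots,\bullet_n$ appear in this cyclic order, and the remaining $L-n$ letters are arbitrary $\Box_i$'s. Transitions (displayed segments are consecutive positions, rest unchanged, $C$ a possibly empty word in the $\Box$-letters): (T1) $\bullet_k\Box_i \to \Box_i\bullet_k$ at rate $p_k$, if $i\neq k$; (T2) $\bullet_{k-1}\,C\,\bullet_k\Box_k \to \bullet_{k-1}\Box_{k-1}\,C\,\bullet_k$ at rate $p_k$; (T3) $\Box_i\bullet_k \to \bullet_k\Box_i$ at rate $q_k$, if $i\neq k$; (T4) $\Box_k\bullet_k\,C\,\bullet_{k+1} \to \bullet_k\,C\,\Box_{k+1}\bullet_{k+1}$ at rate $q_k$. Weights: let $b_k$ be the position of $\bullet_k$ and $C_k$ the set of positions strictly between $b_k$ and $b_{k+1}$ going cyclically forward ($b_{n+1}=b_1$). For $i,k\in\{1,\dots,n\}$ set $w_\Box(i,k)=p_1\cdots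 p_{i-1}q_{i+1}\cdots q_kp_{k+1}\cdots p_n$ if $i\le k$ and $w_\Box(i,k)=q_1\cdots q_kp_{k+1}\cdots p_{i-1}q_{i+1}\cdots q_n$ if $k<i$ (empty products are $1$), as monomials in indeterminates. The weight is the monomial $\mathrm{wt}(w)=\prod_{k=1}^n\prod_{j\in C_k}w_\Box(i_j,k)$ where $w_j=\Box_{i_j}$. $\Omega^I_{L,n}$ is the set of $w\in\Omega_{L,n}$ whose weight monomial contains no $q_k$ with $k\in I$ (i.e. $\mathrm{wt}(w)\ne0$ when $q_k=0$ for $k\in I$ and all other rates are positive). *)

theory Defs
  imports Main "HOL-Library.Multiset"
begin

text \<open>Letters: Ball k is the particle bullet_k, Box i is the empty-site letter Box_i.
  Words on the ring Z/LZ are lists of length L; position i (i < L) is w ! i,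
  and the successor of position i is (i+1) mod L.\<close>

datatype letter = Ball nat | Box nat

text \<open>Labels modulo n, represented in {1..n}.\<close>
definition prevl :: "nat \<Rightarrow> nat \<Rightarrow> nat" where
  "prevl n k = (if k = 1 then n else k - 1)"

definition nextl :: "nat \<Rightarrow> nat \<Rightarrow> nat" where
  "nextl n k = (if k = n then 1 else k + 1)"

definition bpos :: "letter list \<Rightarrow> nat \<Rightarrow> nat" where
  "bpos w k = (THE i. i < length w \<and> w ! i = Ball k)"

definition Omega :: "nat \<Rightarrow> nat \<Rightarrow> letter list set" where
  "Omega L n = {w. length w = L
      \<and> (\<forall>i<L. (\<exists>k\<in>{1..n}. w ! i = Ball k) \<or> (\<exists>k\<in>{1..n}. w ! i = Box k))
      \<and> (\<forall>k\<in>{1..n}. card {i. i < L \<and> w ! i = Ball k} = 1)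
      \<and> (\<forall>k. 1 \<le> k \<and> k < n \<longrightarrow>
            (bpos w k + L - bpos w 1) mod L < (bpos w (k+1) + L - bpos w 1) mod L)}"

text \<open>The displayed segment xs occupies the consecutive positions s, s+1, ... (mod L)
  of the ring, which are pairwise distinct (length xs \<le> L).\<close>
definition is_seg :: "letter list \<Rightarrow> nat \<Rightarrow> letter list \<Rightarrow> bool" where
  "is_seg w s xs \<longleftrightarrow> s < length w \<and> length xs \<le> length w \<and>
      (\<forall>j<length xs. w ! ((s + j) mod length w) = xs ! j)"

definition replace_seg :: "letter list \<Rightarrow> nat \<Rightarrow> letter list \<Rightarrow> letter list" where
  "replace_seg w s ys = map (\<lambda>i. let j = (i + length w - s) mod length w in
        if j < length ys then ys ! j else w ! i) [0..<length w]"

definition is_box :: "letter \<Rightarrow> bool" where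
  "is_box x \<longleftrightarrow> (\<exists>i. x = Box i)"

definition T1 :: "nat \<Rightarrow> nat \<Rightarrow> letter list \<Rightarrow> letter list \<Rightarrow> bool" where
  "T1 n k w w' \<longleftrightarrow> k \<in> {1..n} \<and> (\<exists>s i. i \<noteq> k \<and> is_seg w s [Ball k, Box i]
      \<and> w' = replace_seg w s [Box i, Ball k])"

definition T2 :: "nat \<Rightarrow> nat \<Rightarrow> letter list \<Rightarrow> letter list \<Rightarrow> bool" where
  "T2 n k w w' \<longleftrightarrow> k \<in> {1..n} \<and> (\<exists>s C. (\<forall>x\<in>set C. is_box x)
      \<and> is_seg w s ([Ball (prevl n k)] @ C @ [Ball k, Box k])
      \<and> w' = replace_seg w s ([Ball (prevl n k), Box (prevl n k)] @ C @ [Ball k]))"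

definition T3 :: "nat \<Rightarrow> nat \<Rightarrow> letter list \<Rightarrow> letter list \<Rightarrow> bool" where
  "T3 n k w w' \<longleftrightarrow> k \<in> {1..n} \<and> (\<exists>s i. i \<noteq> k \<and> is_seg w s [Box i, Ball k]
      \<and> w' = replace_seg w s [Ball k, Box i])"

definition T4 :: "nat \<Rightarrow> nat \<Rightarrow> letter list \<Rightarrow> letter list \<Rightarrow> bool" where
  "T4 n k w w' \<longleftrightarrow> k \<in> {1..n} \<and> (\<exists>s C. (\<forall>x\<in>set C. is_box x)
      \<and> is_seg w s ([Box k, Ball k] @ C @ [Ball (nextl n k)])
      \<and> w' = replace_seg w s ([Ball k] @ C @ [Box (nextl n k), Ball (nextl n k)]))"

text \<open>Indeterminates p_k, q_k; monomials are multisets of indeterminates.\<close>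
datatype var = P nat | Q nat

definition wbox :: "nat \<Rightarrow> nat \<Rightarrow> nat \<Rightarrow> var multiset" where
  "wbox n i k = (if i \<le> k then
       mset_set (P ` {1..<i}) + mset_set (Q ` {i+1..k}) + mset_set (P ` {k+1..n})
     else
       mset_set (Q ` {1..k}) + mset_set (P ` {k+1..<i}) + mset_set (Q ` {i+1..n}))"

text \<open>C_k: positions strictly between b_k and b_{k+1} going cyclically forward.
  Their number is (b_{k+1} + L - b_k - 1) mod L (equal to L-1 when b_{k+1} = b_k, i.e. n = 1).\<close>
definition Cset :: "nat \<Rightarrow> letter list \<Rightarrow> nat \<Rightarrow> nat set" where
  "Cset n w k = (let L = length w; a = bpos w k; b = bpos w (nextl n k) in
      {(a + 1 + d) mod L | d. d < (b + L - a - 1) mod L})"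

definition wt :: "nat \<Rightarrow> letter list \<Rightarrow> var multiset" where
  "wt n w = (\<Sum>k\<in>{1..n}. \<Sum>j\<in>Cset n w k.
      (case w ! j of Box i \<Rightarrow> wbox n i k | Ball _ \<Rightarrow> {#}))"

definition OmegaI :: "nat \<Rightarrow> nat \<Rightarrow> nat set \<Rightarrow> letter list set" where
  "OmegaI L n I = {w \<in> Omega L n. \<forall>k\<in>I. count (wt n w) (Q k) = 0}"

end

theory Submission
  imports Defs
begin

(* Rotating a word of Omega_{L,n} so that bullet_1 comes first writes it as a block word
   bullet_1 C_1 bullet_2 C_2 ... bullet_n C_n, and q_m divides w_Box(i,k) iff m lies in the
   cyclic interval (i,k]. Hence Omega^I_{L,n} consists of the rotations of block words in which
   every Box_i of every gap C_k has (i,k] disjoint from I. Each transition only edits the two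
   gaps around one ball:
   (T1) moves a Box_i, i <> k, from the front of C_k to the end of C_{k-1}, shrinking (i,k]
        to (i,k-1];
   (T2) trades a Box_k at the front of C_k for a Box_{k-1} at the front of C_{k-1}, whose
        interval is empty;
   (T3) moves a Box_i from the end of C_{k-1} to the front of C_k, adding only k, which is
        not in I;
   (T4) removes a Box_k from the end of C_{k-1}; its interval misses only k, so k not in I
        forces I to be empty and the new Box_{k+1} in C_k is harmless. *)

section \<open>Modular arithmetic and rotations\<close>

lemma add_mod_diff_cancel:
  fixes r c L :: nat
  assumes "r < L" "c < L"
  shows "((r + c) mod L + L - r) mod L = c"
  using assms by (cases "r + c < L") (auto simp: le_mod_geq mod_if)

lemma diff_mod_add_cancel:
  fixes r b L :: nat
  assumes "r < L" "b < L"
  shows "(r + (b + L - r) mod L) mod L = b"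
  using assms by (cases "b < r") (auto simp: mod_if)

lemma add_mod_diff_mod:
  fixes r x y L :: nat
  assumes "r < L" "x < y" "y \<le> L"
  shows "((r + y) mod L + L - (r + x) mod L - 1) mod L = y - x - 1"
  using assms by (auto simp: mod_if)

lemma lift_Suc_mono_less_bounded:
  fixes c :: "nat \<Rightarrow> nat"
  assumes "\<And>t. t < m \<Longrightarrow> c t < c (Suc t)" "i < j" "j \<le> m"
  shows "c i < c j"
  using assms(2,3)
proof (induction j)
  case (Suc j)
  then show ?case
    using assms(1)[of j] by (cases "i = j") auto
qed simp

lemma set_positions_rotate:
  "{i. i < length w \<and> w ! i = x} = (\<lambda>p. (r + p) mod length w) ` {p. p < length w \<and> rotate r w ! p = x}"
proof (intro equalityI subsetI)
  fix i assume "i \<in> {i. i < length w \<and> w ! i = x}"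
  then have i: "i < length w" "w ! i = x" and pos: "0 < length w" by auto
  define p where "p = (i + length w - r mod length w) mod length w"
  have "(r + p) mod length w = (r mod length w + p) mod length w"
    by (simp add: mod_add_left_eq)
  also have "\<dots> = i"
    using i diff_mod_add_cancel[of "r mod length w" "length w" i] pos by (simp add: p_def)
  finally show "i \<in> (\<lambda>p. (r + p) mod length w) ` {p. p < length w \<and> rotate r w ! p = x}"
    using i pos by (auto simp: nth_rotate p_def intro!: image_eqI[of _ _ p])
qed (auto simp: nth_rotate intro!: mod_less_divisor)

section \<open>Cyclic labels and box weights\<close>

abbreviation nextl_pow :: "nat \<Rightarrow> nat \<Rightarrow> nat \<Rightarrow> nat" where
  "nextl_pow n t a \<equiv> (nextl n ^^ t) a"

lemma nextl_pow_eq: "a \<in> {1..n} \<Longrightarrow> nextl_pow n t a = (a - 1 + t) mod n + 1"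
proof (induction t)
  case (Suc t)
  have "a - 1 + Suc t = Suc (a - 1 + t)"
    using Suc.prems by simp
  then show ?case
    using Suc by (simp only: funpow.simps comp_apply mod_Suc) (simp add: nextl_def)
qed auto

lemma nextl_pow_1: "t < n \<Longrightarrow> nextl_pow n t 1 = Suc t"
  by (simp add: nextl_pow_eq)

lemma nextl_pow_period: "a \<in> {1..n} \<Longrightarrow> nextl_pow n n a = a"
  by (auto simp: nextl_pow_eq mod_if)

lemma nextl_pow_pred: "a \<in> {1..n} \<Longrightarrow> nextl_pow n (n - 1) a = prevl n a"
  by (auto simp: nextl_pow_eq prevl_def mod_if)

lemma nextl_prevl: "k \<in> {1..n} \<Longrightarrow> nextl n (prevl n k) = k"
  by (auto simp: nextl_def prevl_def)

lemma prevl_in_range: "k \<in> {1..n} \<Longrightarrow> prevl n k \<in> {1..n}"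
  by (auto simp: prevl_def)

lemma nextl_in_range: "k \<in> {1..n} \<Longrightarrow> nextl n k \<in> {1..n}"
  by (auto simp: nextl_def)

lemma count_wbox_Q:
  assumes "1 \<le> m"
  shows "count (wbox n i k) (Q m) =
    (if i \<le> k then of_bool (i < m \<and> m \<le> k) else of_bool (m \<le> k \<or> i < m \<and> m \<le> n))"
  using assms unfolding wbox_def by (auto simp: count_mset_set' image_iff)

definition admissible_box :: "nat \<Rightarrow> nat set \<Rightarrow> nat \<Rightarrow> letter \<Rightarrow> bool" where
  "admissible_box n I k x \<longleftrightarrow> (\<exists>i\<in>{1..n}. x = Box i \<and> (\<forall>m\<in>I. count (wbox n i k) (Q m) = 0))"

lemma admissible_box_Box_iff:
  "admissible_box n I k (Box i) \<longleftrightarrow> i \<in> {1..n} \<and> (\<forall>m\<in>I. count (wbox n i k) (Q m) = 0)"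
  by (simp add: admissible_box_def)

lemma admissible_box_move_gap:
  assumes "admissible_box n I k (Box i)"
    and "\<And>m. i \<in> {1..n} \<Longrightarrow> m \<in> I \<Longrightarrow> count (wbox n i k) (Q m) = 0 \<Longrightarrow> count (wbox n i k') (Q m) = 0"
  shows "admissible_box n I k' (Box i)"
  using assms by (simp add: admissible_box_Box_iff)

lemma admissible_box_shift_back:
  assumes "I \<subseteq> {1..n}" "k \<in> {1..n}" "i \<noteq> k" "admissible_box n I k (Box i)"
  shows "admissible_box n I (prevl n k) (Box i)"
  using assms(4)
proof (rule admissible_box_move_gap)
  fix m assume "i \<in> {1..n}" "m \<in> I" "count (wbox n i k) (Q m) = 0"
  moreover have "m \<in> {1..n}"
    using \<open>m \<in> I\<close> assms(1) by blast
  ultimately show "count (wbox n i (prevl n k)) (Q m) = 0"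
    using assms(2,3) by (auto simp: count_wbox_Q prevl_def split: if_splits)
qed

lemma admissible_box_shift_forward:
  assumes "I \<subseteq> {1..n}" "k \<in> {1..n}" "k \<notin> I" "admissible_box n I (prevl n k) (Box i)"
  shows "admissible_box n I k (Box i)"
  using assms(4)
proof (rule admissible_box_move_gap)
  fix m assume "i \<in> {1..n}" "m \<in> I" "count (wbox n i (prevl n k)) (Q m) = 0"
  moreover have "m \<in> {1..n}" "m \<noteq> k"
    using \<open>m \<in> I\<close> assms(1,3) by blast+
  ultimately show "count (wbox n i k) (Q m) = 0"
    using assms(2) by (auto simp: count_wbox_Q prevl_def split: if_splits)
qed

lemma admissible_box_own_gap:
  assumes "I \<subseteq> {1..n}" "k \<in> {1..n}"
  shows "admissible_box n I k (Box k)"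
  using assms by (auto simp: admissible_box_Box_iff count_wbox_Q)

lemma admissible_box_before_own_ball:
  assumes "I \<subseteq> {1..n}" "k \<in> {1..n}" "admissible_box n I (prevl n k) (Box k)"
  shows "I \<subseteq> {k}"
proof
  fix m assume "m \<in> I"
  then have "m \<in> {1..n}" "count (wbox n k (prevl n k)) (Q m) = 0"
    using assms by (auto simp: admissible_box_Box_iff)
  then show "m \<in> {k}"
    using assms(2) by (auto simp: count_wbox_Q prevl_def split: if_splits)
qed

section \<open>Block words\<close>

fun blocks :: "nat \<Rightarrow> nat \<Rightarrow> letter list list \<Rightarrow> letter list" where
  "blocks n a [] = []"
| "blocks n a (C # Cs) = Ball a # C @ blocks n (nextl n a) Cs"

fun admissible_gaps :: "nat \<Rightarrow> nat set \<Rightarrow> nat \<Rightarrow> letter list list \<Rightarrow> bool" where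
  "admissible_gaps n I a [] \<longleftrightarrow> True"
| "admissible_gaps n I a (C # Cs) \<longleftrightarrow>
     (\<forall>x\<in>set C. admissible_box n I a x) \<and> admissible_gaps n I (nextl n a) Cs"

definition box_gaps :: "nat \<Rightarrow> letter list list \<Rightarrow> bool" where
  "box_gaps n Cs \<longleftrightarrow> (\<forall>C\<in>set Cs. \<forall>x\<in>set C. \<exists>i\<in>{1..n}. x = Box i)"

definition ball_pos :: "letter list list \<Rightarrow> nat \<Rightarrow> nat" where
  "ball_pos Cs t = t + sum_list (map length (take t Cs))"

lemma blocks_append:
  "blocks n a (Cs @ Ds) = blocks n a Cs @ blocks n (nextl_pow n (length Cs) a) Ds"
  by (induction Cs arbitrary: a) (auto simp: funpow_swap1)

lemma admissible_gaps_append: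
  "admissible_gaps n I a (Cs @ Ds) \<longleftrightarrow>
     admissible_gaps n I a Cs \<and> admissible_gaps n I (nextl_pow n (length Cs) a) Ds"
  by (induction Cs arbitrary: a) (auto simp: funpow_swap1)

lemma admissible_gaps_iff_nth:
  "admissible_gaps n I a Cs \<longleftrightarrow>
     (\<forall>t<length Cs. \<forall>x\<in>set (Cs ! t). admissible_box n I (nextl_pow n t a) x)"
  by (induction Cs arbitrary: a) (auto simp: All_less_Suc2 funpow_swap1)

lemma admissible_gaps_imp_box_gaps: "admissible_gaps n I a Cs \<Longrightarrow> box_gaps n Cs"
  by (induction Cs arbitrary: a) (auto simp: box_gaps_def admissible_box_def)

lemma admissible_gaps_empty_iff: "admissible_gaps n {} a Cs \<longleftrightarrow> box_gaps n Cs"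
  by (induction Cs arbitrary: a) (auto simp: box_gaps_def admissible_box_def)

lemma admissible_gaps_snoc:
  assumes "length (Cs @ [C]) = n" "a \<in> {1..n}"
  shows "admissible_gaps n I a (Cs @ [C @ [x]]) \<longleftrightarrow>
           admissible_gaps n I a (Cs @ [C]) \<and> admissible_box n I (prevl n a) x"
  using assms nextl_pow_pred[OF assms(2)] by (auto simp: admissible_gaps_append)

lemma length_blocks: "length (blocks n a Cs) = ball_pos Cs (length Cs)"
  by (induction Cs arbitrary: a) (auto simp: ball_pos_def)

lemma ball_pos_Suc:
  "t < length Cs \<Longrightarrow> ball_pos Cs (Suc t) = ball_pos Cs t + 1 + length (Cs ! t)"
  by (simp add: ball_pos_def take_Suc_conv_app_nth)

lemma length_blocks_take: "t \<le> length Cs \<Longrightarrow> length (blocks n a (take t Cs)) = ball_pos Cs t"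
  by (simp add: length_blocks ball_pos_def)

lemma blocks_split:
  assumes "t < length Cs"
  shows "blocks n a Cs = blocks n a (take t Cs) @ Ball (nextl_pow n t a) # Cs ! t @
                          blocks n (nextl_pow n (Suc t) a) (drop (Suc t) Cs)"
proof -
  have "take t Cs @ Cs ! t # drop (Suc t) Cs = Cs"
    using assms by (simp add: Cons_nth_drop_Suc)
  moreover have "blocks n a (take t Cs @ Cs ! t # drop (Suc t) Cs) =
      blocks n a (take t Cs) @ Ball (nextl_pow n t a) # Cs ! t @
      blocks n (nextl_pow n (Suc t) a) (drop (Suc t) Cs)"
    using assms by (simp add: blocks_append)
  ultimately show ?thesis
    by simp
qed

lemma nth_blocks_ball_pos:
  "t < length Cs \<Longrightarrow> blocks n a Cs ! ball_pos Cs t = Ball (nextl_pow n t a)"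
  using blocks_split[of t Cs n a] length_blocks_take[of t Cs n a] by (simp add: nth_append)

lemma nth_blocks_gap:
  "t < length Cs \<Longrightarrow> d < length (Cs ! t) \<Longrightarrow> blocks n a Cs ! (ball_pos Cs t + 1 + d) = Cs ! t ! d"
  using blocks_split[of t Cs n a] length_blocks_take[of t Cs n a] by (simp add: nth_append)

lemma ball_pos_less_length: "t < length Cs \<Longrightarrow> ball_pos Cs t < length (blocks n a Cs)"
  using blocks_split[of t Cs n a] length_blocks_take[of t Cs n a] by simp

lemma nth_blocks_cases:
  assumes "p < length (blocks n a Cs)"
  shows "\<exists>t<length Cs. p = ball_pos Cs t \<or> (\<exists>d<length (Cs ! t). p = ball_pos Cs t + 1 + d)"
  using assms
proof (induction Cs arbitrary: a p)
  case (Cons C Cs)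
  consider "p \<le> length C" | q where "p = Suc (length C + q)"
    by (meson less_imp_Suc_add not_le)
  then show ?case
  proof cases
    case 1
    then show ?thesis
      by (intro exI[of _ 0]) (cases p; simp add: ball_pos_def)
  next
    case (2 q)
    then have "q < length (blocks n (nextl n a) Cs)"
      using Cons.prems by simp
    then obtain t where "t < length Cs"
      "q = ball_pos Cs t \<or> (\<exists>d<length (Cs ! t). q = ball_pos Cs t + 1 + d)"
      using Cons.IH by blast
    moreover have "ball_pos (C # Cs) (Suc t) = Suc (length C + ball_pos Cs t)"
      by (simp add: ball_pos_def)
    ultimately show ?thesis
      using 2 by (intro exI[of _ "Suc t"]) auto
  qed
qed simp

lemma nth_blocks_Ball_or_Box:
  assumes "box_gaps n Cs" "p < length (blocks n a Cs)"
  shows "(\<exists>t<length Cs. p = ball_pos Cs t \<and> blocks n a Cs ! p = Ball (nextl_pow n t a))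
    \<or> (\<exists>i\<in>{1..n}. blocks n a Cs ! p = Box i)"
proof -
  consider t where "t < length Cs" "p = ball_pos Cs t"
    | t d where "t < length Cs" "d < length (Cs ! t)" "p = ball_pos Cs t + 1 + d"
    using nth_blocks_cases[OF assms(2)] by blast
  then show ?thesis
  proof cases
    case 1
    then show ?thesis
      by (auto simp: nth_blocks_ball_pos)
  next
    case 2
    then have "blocks n a Cs ! p \<in> set (Cs ! t)" "Cs ! t \<in> set Cs"
      using nth_blocks_gap[of t Cs d n a] by simp_all
    then show ?thesis
      using assms(1) by (auto simp: box_gaps_def)
  qed
qed

lemma nextl_pow_complement:
  assumes "t \<le> n" "a \<in> {1..n}"
  shows "nextl_pow n (n - t) (nextl_pow n t a) = a"
proof -
  have "nextl_pow n (n - t) (nextl_pow n t a) = nextl_pow n (n - t + t) a"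
    by (simp only: funpow_add comp_apply)
  then show ?thesis
    using assms nextl_pow_period by simp
qed

lemma blocks_rotate:
  assumes "t \<le> length Cs" "length Cs = n" "a \<in> {1..n}"
  shows "rotate (ball_pos Cs t) (blocks n a Cs) = blocks n (nextl_pow n t a) (drop t Cs @ take t Cs)"
proof -
  have "blocks n a Cs = blocks n a (take t Cs) @ blocks n (nextl_pow n t a) (drop t Cs)"
    using assms(1) blocks_append[of n a "take t Cs" "drop t Cs"] by simp
  then have "rotate (ball_pos Cs t) (blocks n a Cs) =
      blocks n (nextl_pow n t a) (drop t Cs) @ blocks n a (take t Cs)"
    using length_blocks_take[OF assms(1)] by (metis rotate_append)
  moreover have "nextl_pow n (length (drop t Cs)) (nextl_pow n t a) = a"
    using assms nextl_pow_complement by simp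
  ultimately show ?thesis
    by (simp add: blocks_append)
qed

lemma admissible_gaps_rotate:
  assumes "t \<le> length Cs" "length Cs = n" "a \<in> {1..n}" "admissible_gaps n I a Cs"
  shows "admissible_gaps n I (nextl_pow n t a) (drop t Cs @ take t Cs)"
proof -
  have "admissible_gaps n I a (take t Cs) \<and> admissible_gaps n I (nextl_pow n t a) (drop t Cs)"
    using assms(1,4) admissible_gaps_append[of n I a "take t Cs" "drop t Cs"] by simp
  moreover have "nextl_pow n (length (drop t Cs)) (nextl_pow n t a) = a"
    using assms nextl_pow_complement by simp
  ultimately show ?thesis
    by (simp add: admissible_gaps_append)
qed

section \<open>Words of \<open>\<Omega>\<close> as rotated block words\<close>

lemma finite_Cset: "finite (Cset n w k)"
  by (simp add: Cset_def Let_def)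

lemma Cset_eq_image:
  "Cset n w k = (\<lambda>d. (bpos w k + 1 + d) mod length w) `
     {..<(bpos w (nextl n k) + length w - bpos w k - 1) mod length w}"
  by (auto simp: Cset_def Let_def)

lemma count_wt_Q_eq_0_iff:
  "count (wt n w) (Q m) = 0 \<longleftrightarrow>
     (\<forall>k\<in>{1..n}. \<forall>x\<in>(!) w ` Cset n w k. \<forall>i. x = Box i \<longrightarrow> count (wbox n i k) (Q m) = 0)"
  unfolding wt_def by (auto simp: count_sum finite_Cset split: letter.splits)

lemma ball_atLeast1AtMost_iff: "(\<forall>k\<in>{1..n}. R k) \<longleftrightarrow> (\<forall>t<n. R (Suc t))"
  unfolding image_Suc_lessThan[symmetric] by blast

locale block_decomposition =
  fixes n :: nat and w :: "letter list" and r :: nat and Cs :: "letter list list"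
  assumes length_gaps: "length Cs = n"
    and box_gaps: "box_gaps n Cs"
    and r_less: "r < length w"
    and rotate_eq: "rotate r w = blocks n 1 Cs"
begin

lemma length_eq: "length w = ball_pos Cs n"
  using rotate_eq length_gaps by (metis length_blocks length_rotate)

lemma length_blocks_eq: "length (blocks n 1 Cs) = length w"
  by (metis length_rotate rotate_eq)

lemma n_pos: "0 < n"
  using length_eq r_less length_gaps by (cases n) (auto simp: ball_pos_def)

lemma ball_pos_less: "t < n \<Longrightarrow> ball_pos Cs t < length w"
  using ball_pos_less_length[of t Cs n 1] length_gaps length_blocks_eq by simp

lemma ball_pos_le: "t \<le> n \<Longrightarrow> ball_pos Cs t \<le> length w"
  using ball_pos_less[of t] length_eq by (cases "t = n") auto

lemma ball_positions:
  assumes "k \<in> {1..n}"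
  shows "{i. i < length w \<and> w ! i = Ball k} = {(r + ball_pos Cs (k - 1)) mod length w}"
proof -
  have "{p. p < length w \<and> blocks n 1 Cs ! p = Ball k} = {ball_pos Cs (k - 1)}"
  proof (intro equalityI subsetI)
    fix p assume "p \<in> {p. p < length w \<and> blocks n 1 Cs ! p = Ball k}"
    then have "p < length (blocks n 1 Cs)" "blocks n 1 Cs ! p = Ball k"
      using length_blocks_eq by auto
    then obtain t where "t < n" "p = ball_pos Cs t" "k = nextl_pow n t 1"
      using nth_blocks_Ball_or_Box[OF box_gaps] length_gaps by fastforce
    then show "p \<in> {ball_pos Cs (k - 1)}"
      using nextl_pow_1[of t n] by simp
  next
    fix p assume "p \<in> {ball_pos Cs (k - 1)}"
    moreover have "k - 1 < n" "nextl_pow n (k - 1) 1 = k"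
      using assms nextl_pow_1[of "k - 1" n] by auto
    ultimately show "p \<in> {p. p < length w \<and> blocks n 1 Cs ! p = Ball k}"
      using ball_pos_less nth_blocks_ball_pos[of "k - 1" Cs n 1] length_gaps by auto
  qed
  then show ?thesis
    using set_positions_rotate[of w "Ball k" r] rotate_eq by simp
qed

lemma bpos_eq: "k \<in> {1..n} \<Longrightarrow> bpos w k = (r + ball_pos Cs (k - 1)) mod length w"
  using ball_positions[of k] unfolding bpos_def by (simp add: set_eq_iff)

lemma bpos_1: "bpos w 1 = r"
  using bpos_eq[of 1] n_pos r_less by (simp add: ball_pos_def)

lemma bpos_nextl: "k \<in> {1..n} \<Longrightarrow> bpos w (nextl n k) = (r + ball_pos Cs k) mod length w"
  using bpos_eq[of "Suc k"] bpos_1 length_eq r_less by (auto simp: nextl_def)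

lemma in_Omega: "w \<in> Omega (length w) n"
  unfolding Omega_def
proof (intro CollectI conjI allI impI ballI)
  fix i assume "i < length w"
  then have "i \<in> (\<lambda>p. (r + p) mod length w) ` {p. p < length w \<and> rotate r w ! p = w ! i}"
    using set_positions_rotate[of w "w ! i" r] by blast
  then obtain p where "p < length (blocks n 1 Cs)" "blocks n 1 Cs ! p = w ! i"
    using rotate_eq length_blocks_eq by auto
  moreover have "nextl_pow n t 1 \<in> {1..n}" if "t < n" for t
    using that nextl_pow_1 by simp
  ultimately show "(\<exists>k\<in>{1..n}. w ! i = Ball k) \<or> (\<exists>k\<in>{1..n}. w ! i = Box k)"
    using nth_blocks_Ball_or_Box[OF box_gaps] length_gaps by metis
next
  fix k assume "k \<in> {1..n}"
  then show "card {i. i < length w \<and> w ! i = Ball k} = 1"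
    by (simp add: ball_positions)
next
  fix k assume k: "1 \<le> k \<and> k < n"
  have "(bpos w j + length w - bpos w 1) mod length w = ball_pos Cs (j - 1)" if "j \<in> {1..n}" for j
    using bpos_eq[OF that] bpos_1 add_mod_diff_cancel r_less ball_pos_less[of "j - 1"] that by auto
  moreover have "ball_pos Cs (k - 1) < ball_pos Cs k"
    using ball_pos_Suc[of "k - 1" Cs] k length_gaps by auto
  ultimately show "(bpos w k + length w - bpos w 1) mod length w
      < (bpos w (k + 1) + length w - bpos w 1) mod length w"
    using k by simp
qed simp

lemma Cset_letters:
  assumes k: "k \<in> {1..n}"
  shows "(!) w ` Cset n w k = set (Cs ! (k - 1))"
proof -
  define c where "c = ball_pos Cs (k - 1)"
  have step: "ball_pos Cs k = c + 1 + length (Cs ! (k - 1))"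
    using ball_pos_Suc[of "k - 1" Cs] k length_gaps unfolding c_def by auto
  then have "(bpos w (nextl n k) + length w - bpos w k - 1) mod length w = length (Cs ! (k - 1))"
    using add_mod_diff_mod[of r "length w" c "ball_pos Cs k"] r_less ball_pos_le[of k] k
    unfolding bpos_eq[OF k] bpos_nextl[OF k] c_def by auto
  moreover have "(bpos w k + 1 + d) mod length w = (r + (c + 1 + d)) mod length w" for d
    unfolding bpos_eq[OF k] c_def by (metis add.assoc mod_add_left_eq)
  ultimately have Cset_eq: "Cset n w k = (\<lambda>d. (r + (c + 1 + d)) mod length w) ` {..<length (Cs ! (k - 1))}"
    unfolding Cset_eq_image by simp
  have "w ! ((r + (c + 1 + d)) mod length w) = Cs ! (k - 1) ! d"
    if "d < length (Cs ! (k - 1))" for d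
  proof -
    have "c + 1 + d < length w"
      using that step ball_pos_le[of k] k by auto
    then show ?thesis
      using that nth_rotate[of "c + 1 + d" w r] rotate_eq k length_gaps
        nth_blocks_gap[of "k - 1" Cs d n 1] unfolding c_def by auto
  qed
  then show ?thesis
    unfolding Cset_eq by (auto simp: in_set_conv_nth image_iff)
qed

lemma Q_free_iff_admissible_gaps:
  "(\<forall>m\<in>I. count (wt n w) (Q m) = 0) \<longleftrightarrow> admissible_gaps n I 1 Cs"
proof -
  have "(\<forall>m\<in>I. count (wt n w) (Q m) = 0) \<longleftrightarrow>
      (\<forall>m\<in>I. \<forall>k\<in>{1..n}. \<forall>x\<in>set (Cs ! (k - 1)). \<forall>i. x = Box i \<longrightarrow> count (wbox n i k) (Q m) = 0)"
    by (simp add: count_wt_Q_eq_0_iff Cset_letters)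
  also have "\<dots> \<longleftrightarrow>
      (\<forall>m\<in>I. \<forall>t<n. \<forall>x\<in>set (Cs ! t). \<forall>i. x = Box i \<longrightarrow> count (wbox n i (Suc t)) (Q m) = 0)"
    by (simp only: ball_atLeast1AtMost_iff diff_Suc_1)
  also have "\<dots> \<longleftrightarrow> (\<forall>t<n. \<forall>x\<in>set (Cs ! t). admissible_box n I (nextl_pow n t 1) x)"
  proof -
    have "admissible_box n I (nextl_pow n t 1) x \<longleftrightarrow>
        (\<forall>m\<in>I. \<forall>i. x = Box i \<longrightarrow> count (wbox n i (Suc t)) (Q m) = 0)"
      if t: "t < n" and x: "x \<in> set (Cs ! t)" for t x
    proof -
      have "Cs ! t \<in> set Cs"
        using t length_gaps by simp
      then obtain i where "i \<in> {1..n}" "x = Box i"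
        using box_gaps x unfolding box_gaps_def by blast
      then show ?thesis
        unfolding admissible_box_def nextl_pow_1[OF t] by auto
    qed
    then show ?thesis
      by blast
  qed
  also have "\<dots> \<longleftrightarrow> admissible_gaps n I 1 Cs"
    by (simp only: admissible_gaps_iff_nth length_gaps)
  finally show ?thesis .
qed

end

lemma map_nth_upt_eq_blocks:
  fixes c :: "nat \<Rightarrow> nat" and u :: "letter list"
  assumes "c 0 = 0" and step: "\<And>t. t < m \<Longrightarrow> c t < c (Suc t)"
    and balls: "\<And>t. t < m \<Longrightarrow> u ! c t = Ball (nextl_pow n t a)" and "j \<le> m"
  shows "map ((!) u) [0..<c j] = blocks n a (map (\<lambda>t. map ((!) u) [Suc (c t)..<c (Suc t)]) [0..<j])"
  using assms(4)
proof (induction j)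
  case (Suc j)
  have less: "c j < c (Suc j)"
    using step Suc.prems by simp
  then have "[0..<c (Suc j)] = [0..<c j] @ [c j..<c (Suc j)]"
    by (metis le_add_diff_inverse less_imp_le upt_add_eq_append zero_le)
  also have "\<dots> = [0..<c j] @ c j # [Suc (c j)..<c (Suc j)]"
    using less by (simp add: upt_conv_Cons)
  finally show ?case
    using Suc balls[of j] by (simp add: blocks_append)
qed (simp add: assms(1))

lemma blocks_of_ball_positions:
  fixes c :: "nat \<Rightarrow> nat" and u :: "letter list"
  assumes c0: "c 0 = 0" and cm: "c m = length u"
    and step: "\<And>t. t < m \<Longrightarrow> c t < c (Suc t)"
    and balls: "\<And>t. t < m \<Longrightarrow> u ! c t = Ball (nextl_pow n t a)"
    and letters: "\<And>p. p < length u \<Longrightarrow> (\<exists>t<m. p = c t) \<or> (\<exists>i\<in>{1..n}. u ! p = Box i)"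
  obtains Cs where "length Cs = m" "box_gaps n Cs" "u = blocks n a Cs"
proof
  define Cs where "Cs = map (\<lambda>t. map ((!) u) [Suc (c t)..<c (Suc t)]) [0..<m]"
  show "length Cs = m"
    by (simp add: Cs_def)
  show "u = blocks n a Cs"
    using map_nth_upt_eq_blocks[where m = m and j = m, OF c0 step balls] cm map_nth[of u]
    by (simp add: Cs_def)
  have mono: "c s < c t" if "s < t" "t \<le> m" for s t
    using lift_Suc_mono_less_bounded[of m c s t] step that by blast
  show "box_gaps n Cs"
    unfolding box_gaps_def Cs_def
  proof (intro ballI)
    fix C x assume "C \<in> set (map (\<lambda>t. map ((!) u) [Suc (c t)..<c (Suc t)]) [0..<m])" "x \<in> set C"
    then obtain t p where t: "t < m" and p: "c t < p" "p < c (Suc t)" and x: "x = u ! p"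
      by (auto simp: Suc_le_eq)
    have "p < length u"
      using p mono[of "Suc t" m] t cm by (cases "Suc t = m") auto
    moreover have "p \<noteq> c s" if "s < m" for s
    proof (cases "s \<le> t")
      case True
      then show ?thesis
        using mono[of s t] p t by (cases "s = t") auto
    next
      case False
      then show ?thesis
        using mono[of "Suc t" s] p that by (cases "s = Suc t") auto
    qed
    ultimately show "\<exists>i\<in>{1..n}. x = Box i"
      using letters x by blast
  qed
qed

lemma Omega_bpos:
  assumes "w \<in> Omega L n" "k \<in> {1..n}"
  shows "bpos w k < L" "w ! bpos w k = Ball k" "\<And>i. i < L \<Longrightarrow> w ! i = Ball k \<Longrightarrow> i = bpos w k"
proof -
  have "length w = L" "card {i. i < L \<and> w ! i = Ball k} = 1"
    using assms by (auto simp: Omega_def)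
  then obtain x where "{i. i < L \<and> w ! i = Ball k} = {x}"
    using card_1_singletonE by blast
  then have x: "\<And>i. (i < L \<and> w ! i = Ball k) \<longleftrightarrow> i = x"
    by blast
  then have "bpos w k = x"
    unfolding bpos_def \<open>length w = L\<close> by simp
  then show "bpos w k < L" "w ! bpos w k = Ball k" "\<And>i. i < L \<Longrightarrow> w ! i = Ball k \<Longrightarrow> i = bpos w k"
    using x by auto
qed

lemma Omega_ball_offsets:
  assumes n: "1 \<le> n" and w: "w \<in> Omega L n"
    and u_def: "u = rotate (bpos w 1) w"
    and c_def: "c = (\<lambda>t. if t < n then (bpos w (Suc t) + L - bpos w 1) mod L else L)"
  shows "c 0 = 0" and "c n = length u" and "\<And>t. t < n \<Longrightarrow> c t < c (Suc t)"
    and "\<And>t. t < n \<Longrightarrow> u ! c t = Ball (nextl_pow n t 1)"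
    and "\<And>p. p < length u \<Longrightarrow> (\<exists>t<n. p = c t) \<or> (\<exists>i\<in>{1..n}. u ! p = Box i)"
proof -
  define r where "r = bpos w 1"
  have L: "length w = L" "length u = L"
    using w by (simp_all add: Omega_def u_def)
  have r: "r < L"
    using Omega_bpos(1)[OF w, of 1] n by (simp add: r_def)
  have nth_u: "u ! p = w ! ((r + p) mod L)" if "p < L" for p
    using that L by (simp add: u_def r_def nth_rotate)
  show "c 0 = 0" "c n = length u"
    using r L n by (simp_all add: c_def r_def)
  have "(bpos w (Suc t) + L - r) mod L < (bpos w (Suc (Suc t)) + L - r) mod L" if "Suc t < n" for t
    using w that by (simp add: Omega_def r_def)
  then show "c t < c (Suc t)" if "t < n" for t
    using that r by (auto simp: c_def r_def)
  show "u ! c t = Ball (nextl_pow n t 1)" if "t < n" for t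
    using that nth_u Omega_bpos(1,2)[OF w, of "Suc t"] r diff_mod_add_cancel[of r L] nextl_pow_1[OF that]
    by (simp add: c_def r_def)
  show "(\<exists>t<n. p = c t) \<or> (\<exists>i\<in>{1..n}. u ! p = Box i)" if p: "p < length u" for p
  proof -
    have rp: "(r + p) mod L < L"
      using r by simp
    then have "(\<exists>j\<in>{1..n}. w ! ((r + p) mod L) = Ball j) \<or> (\<exists>i\<in>{1..n}. w ! ((r + p) mod L) = Box i)"
      using w unfolding Omega_def by blast
    then consider j where "j \<in> {1..n}" "u ! p = Ball j" | "\<exists>i\<in>{1..n}. u ! p = Box i"
      using nth_u p L by auto
    then show ?thesis
    proof cases
      case 1
      then have "(r + p) mod L = bpos w j"
        using Omega_bpos(3)[OF w] rp nth_u p L by simp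
      then have "p = c (j - 1)"
        using 1 add_mod_diff_cancel[of r L p] r p L by (auto simp: c_def r_def)
      then show ?thesis
        using 1 by (intro disjI1 exI[of _ "j - 1"]) auto
    qed simp
  qed
qed

lemma Omega_imp_block_decomposition:
  assumes "1 \<le> n" "w \<in> Omega L n"
  obtains r Cs where "block_decomposition n w r Cs"
proof -
  obtain Cs where "length Cs = n" "box_gaps n Cs" "rotate (bpos w 1) w = blocks n 1 Cs"
    by (rule blocks_of_ball_positions[OF Omega_ball_offsets[OF assms refl refl]])
  moreover have "bpos w 1 < length w"
    using Omega_bpos(1)[OF assms(2), of 1] assms by (simp add: Omega_def)
  ultimately have "block_decomposition n w (bpos w 1) Cs"
    by unfold_locales
  then show ?thesis
    by (rule that)
qed

section \<open>Admissible rings and the transitions\<close>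

definition admissible_ring :: "nat \<Rightarrow> nat set \<Rightarrow> letter list \<Rightarrow> bool" where
  "admissible_ring n I v \<longleftrightarrow>
     (\<exists>r Cs. length Cs = n \<and> admissible_gaps n I 1 Cs \<and> rotate r v = blocks n 1 Cs)"

lemma OmegaI_iff_admissible_ring:
  assumes n: "1 \<le> n"
  shows "w \<in> OmegaI L n I \<longleftrightarrow> length w = L \<and> admissible_ring n I w"
proof
  assume w: "w \<in> OmegaI L n I"
  then have "w \<in> Omega L n"
    by (simp add: OmegaI_def)
  then obtain r Cs where dec: "block_decomposition n w r Cs"
    using Omega_imp_block_decomposition[OF n] by blast
  then have "admissible_gaps n I 1 Cs"
    using w block_decomposition.Q_free_iff_admissible_gaps by (auto simp: OmegaI_def)
  then show "length w = L \<and> admissible_ring n I w"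
    using w dec unfolding admissible_ring_def block_decomposition_def
    by (auto simp: OmegaI_def Omega_def)
next
  assume "length w = L \<and> admissible_ring n I w"
  then obtain r Cs where L: "length w = L" and Cs: "length Cs = n" "admissible_gaps n I 1 Cs"
    and rot: "rotate r w = blocks n 1 Cs"
    unfolding admissible_ring_def by blast
  have "w \<noteq> []"
    using rot Cs(1) n by (cases Cs) auto
  then have "block_decomposition n w (r mod length w) Cs"
    using Cs rot admissible_gaps_imp_box_gaps by unfold_locales (simp_all add: rotate_conv_mod[symmetric])
  then show "w \<in> OmegaI L n I"
    using Cs(2) L block_decomposition.in_Omega block_decomposition.Q_free_iff_admissible_gaps
    unfolding OmegaI_def by blast
qed

lemma rotate_inverse:
  assumes "xs \<noteq> []"
  obtains q where "q < length xs" "rotate q (rotate r xs) = xs"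
proof
  let ?q = "(length xs - r mod length xs) mod length xs"
  show "?q < length xs"
    using assms by simp
  have "(?q + r) mod length xs = (length xs - r mod length xs + r) mod length xs"
    by (rule mod_add_left_eq)
  also have "\<dots> = (length xs - r mod length xs + r mod length xs) mod length xs"
    by (rule mod_add_right_eq[symmetric])
  also have "\<dots> = 0"
    using assms by simp
  finally have "(?q + r) mod length xs = 0" .
  then show "rotate ?q (rotate r xs) = xs"
    by (metis rotate_conv_mod rotate_rotate rotate0 id_apply)
qed

lemma admissible_ring_rotate_iff: "admissible_ring n I (rotate s v) \<longleftrightarrow> admissible_ring n I v"
proof (cases "v = []")
  case False
  then obtain q where "rotate q (rotate s v) = v"
    using rotate_inverse by blast
  then show ?thesis
    unfolding admissible_ring_def by (metis rotate_rotate)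
qed simp

lemma admissible_ring_blocks:
  assumes "k \<in> {1..n}" "length Cs = n" "admissible_gaps n I k Cs"
  shows "admissible_ring n I (blocks n k Cs)"
proof -
  define t where "t = n + 1 - k"
  have t: "t \<le> length Cs" "nextl_pow n t k = 1"
    using assms(1,2) nextl_pow_eq[OF assms(1), of t] by (auto simp: t_def)
  show ?thesis
    unfolding admissible_ring_def
    using blocks_rotate[OF t(1) assms(2,1)] admissible_gaps_rotate[OF t(1) assms(2,1,3)] t(2) assms(2)
    by (intro exI conjI) auto
qed

lemma admissible_ring_at_Ball:
  assumes "admissible_ring n I v" "v ! 0 = Ball k"
  obtains Cs where "length Cs = n" "admissible_gaps n I k Cs" "v = blocks n k Cs"
proof -
  obtain r Cs where Cs: "length Cs = n" "admissible_gaps n I 1 Cs" and rot: "rotate r v = blocks n 1 Cs"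
    using assms(1) unfolding admissible_ring_def by blast
  show ?thesis
  proof (cases "v = []")
    case True
    then show ?thesis
      using rot Cs that[of "[]"] by (cases Cs) auto
  next
    case False
    then obtain q where q: "q < length v" "v = rotate q (blocks n 1 Cs)"
      using rotate_inverse[of v r] rot by metis
    then have qX: "q < length (blocks n 1 Cs)"
      by simp
    moreover have "blocks n 1 Cs \<noteq> []"
      using qX by (cases "blocks n 1 Cs") auto
    ultimately have "blocks n 1 Cs ! q = Ball k"
      using assms(2) q(2) nth_rotate[of 0 "blocks n 1 Cs" q] by simp
    then obtain t where t: "t < n" "q = ball_pos Cs t" "k = nextl_pow n t 1"
      using nth_blocks_Ball_or_Box[OF admissible_gaps_imp_box_gaps[OF Cs(2)] qX] Cs(1) by fastforce
    then have "1 \<in> {1..n}" "t \<le> length Cs"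
      using Cs(1) by auto
    then show ?thesis
      using that[of "drop t Cs @ take t Cs"] q t Cs blocks_rotate admissible_gaps_rotate by simp
  qed
qed

lemma boxes_append_Ball_eq:
  assumes "\<forall>x\<in>set C. is_box x" "\<forall>x\<in>set D. is_box x" "C @ Ball a # X = D @ Ball b # Y"
  shows "C = D \<and> a = b \<and> X = Y"
  using assms
proof (induction C arbitrary: D)
  case Nil
  then show ?case by (cases D) (auto simp: is_box_def)
next
  case (Cons c C)
  then show ?case by (cases D) (auto simp: is_box_def)
qed

lemma eq_blocks_Ball_BoxE:
  assumes "Ball b # Box i # X = blocks n a Cs"
  obtains C Cs' where "Cs = (Box i # C) # Cs'" "X = C @ blocks n (nextl n a) Cs'"
proof (cases Cs)
  case (Cons C0 Cs')
  with assms[symmetric] that show ?thesis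
    by (cases C0; cases Cs') auto
qed (use assms in simp)

lemma eq_blocks_gap_BallE:
  assumes "box_gaps n Cs" "\<forall>x\<in>set C. is_box x" "Ball b # C @ Ball c # X = blocks n a Cs"
  obtains Cs' where "Cs = C # Cs'" "Ball c # X = blocks n (nextl n a) Cs'"
proof (cases Cs)
  case (Cons C0 Cs')
  then have "C0 \<in> set Cs"
    by simp
  then have C0: "\<forall>x\<in>set C0. is_box x"
    using assms(1) unfolding box_gaps_def is_box_def by blast
  have "Ball a # C0 @ blocks n (nextl n a) Cs' = Ball b # C @ Ball c # X"
    using assms(3)[symmetric] Cons by (simp only: blocks.simps)
  then have eq: "C @ Ball c # X = C0 @ blocks n (nextl n a) Cs'"
    by (metis list.inject)
  show ?thesis
  proof (cases Cs')
    case Nil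
    then have "Ball c \<in> set C0"
      using eq by (metis append_Nil2 blocks.simps(1) in_set_conv_decomp)
    then have "is_box (Ball c)"
      using C0 by blast
    then show ?thesis
      by (simp add: is_box_def)
  next
    case (Cons C1 Cs'')
    then have "C @ Ball c # X = C0 @ Ball (nextl n a) # C1 @ blocks n (nextl n (nextl n a)) Cs''"
      using eq by (simp only: blocks.simps)
    then have "C = C0 \<and> c = nextl n a \<and> X = C1 @ blocks n (nextl n (nextl n a)) Cs''"
      by (rule boxes_append_Ball_eq[OF assms(2) C0])
    then show ?thesis
      using that \<open>Cs = C0 # Cs'\<close> Cons by simp
  qed
qed (use assms in simp)

lemma eq_blocks_snoc_BoxE:
  assumes "X @ [Box i] = blocks n a Cs"
  obtains Cs' C where "Cs = Cs' @ [C @ [Box i]]" "X = blocks n a (Cs' @ [C])"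
proof (cases Cs rule: rev_cases)
  case (snoc Cs' C0)
  then have eq: "blocks n a Cs' @ Ball (nextl_pow n (length Cs') a) # C0 = X @ [Box i]"
    using assms[symmetric] by (simp add: blocks_append)
  show ?thesis
  proof (cases C0 rule: rev_cases)
    case Nil
    then show ?thesis
      using eq by (metis append_Cons last_snoc letter.distinct(1))
  next
    case (snoc C y)
    then show ?thesis
      using eq that \<open>Cs = Cs' @ [C0]\<close> by (simp add: blocks_append)
  qed
qed (use assms in simp)

lemma admissible_ring_T1:
  assumes I: "I \<subseteq> {1..n}" and k: "k \<in> {1..n}" and "i \<noteq> k"
    and ring: "admissible_ring n I (Ball k # Box i # rest)"
  shows "admissible_ring n I (Box i # Ball k # rest)"
proof -
  obtain Cs where Cs: "length Cs = n" "admissible_gaps n I k Cs" "Ball k # Box i # rest = blocks n k Cs"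
    by (rule admissible_ring_at_Ball[OF ring nth_Cons_0])
  obtain C Cs' where Cs': "Cs = (Box i # C) # Cs'" "rest = C @ blocks n (nextl n k) Cs'"
    by (rule eq_blocks_Ball_BoxE[OF Cs(3)])
  obtain Ds D where DsD: "C # Cs' = Ds @ [D]"
    by (cases "C # Cs'" rule: rev_cases) auto
  have len: "length (Ds @ [D]) = n"
    using Cs(1) Cs'(1) DsD by (metis length_Cons)
  have "admissible_box n I (prevl n k) (Box i)"
    using admissible_box_shift_back[OF I k \<open>i \<noteq> k\<close>] Cs(2) Cs'(1) by simp
  then have gaps: "admissible_gaps n I k (Ds @ [D @ [Box i]])"
    using admissible_gaps_snoc[OF len k] Cs(2) Cs'(1) DsD[symmetric] by simp
  have "rotate 1 (Box i # Ball k # rest) = blocks n k (C # Cs') @ [Box i]"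
    using Cs'(2) by simp
  then have word: "rotate 1 (Box i # Ball k # rest) = blocks n k (Ds @ [D @ [Box i]])"
    unfolding DsD by (simp add: blocks_append)
  have "length (Ds @ [D @ [Box i]]) = n"
    using len by simp
  then have "admissible_ring n I (rotate 1 (Box i # Ball k # rest))"
    unfolding word using admissible_ring_blocks[OF k _ gaps] by blast
  then show ?thesis
    by (simp only: admissible_ring_rotate_iff)
qed

lemma admissible_ring_T2:
  assumes I: "I \<subseteq> {1..n}" and k: "k \<in> {1..n}" and C: "\<forall>x\<in>set C. is_box x"
    and ring: "admissible_ring n I (Ball (prevl n k) # C @ Ball k # Box k # rest)"
  shows "admissible_ring n I (Ball (prevl n k) # Box (prevl n k) # C @ Ball k # rest)"
proof -
  let ?p = "prevl n k"
  obtain Cs where Cs: "length Cs = n" "admissible_gaps n I ?p Cs"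
    "Ball ?p # C @ Ball k # Box k # rest = blocks n ?p Cs"
    by (rule admissible_ring_at_Ball[OF ring nth_Cons_0])
  obtain Cs' where Cs': "Cs = C # Cs'" "Ball k # Box k # rest = blocks n (nextl n ?p) Cs'"
    by (rule eq_blocks_gap_BallE[OF admissible_gaps_imp_box_gaps[OF Cs(2)] C Cs(3)])
  obtain C' Cs'' where Cs'': "Cs' = (Box k # C') # Cs''" "rest = C' @ blocks n (nextl n k) Cs''"
    using eq_blocks_Ball_BoxE[OF Cs'(2)] nextl_prevl[OF k] by metis
  have word: "Ball ?p # Box ?p # C @ Ball k # rest = blocks n ?p ((Box ?p # C) # C' # Cs'')"
    using Cs''(2) nextl_prevl[OF k] by simp
  have "admissible_gaps n I ?p ((Box ?p # C) # C' # Cs'')"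
    using Cs(2) Cs'(1) Cs''(1) nextl_prevl[OF k] admissible_box_own_gap[OF I prevl_in_range[OF k]]
    by simp
  moreover have "length ((Box ?p # C) # C' # Cs'') = n"
    using Cs(1) Cs'(1) Cs''(1) by simp
  ultimately show ?thesis
    unfolding word using admissible_ring_blocks[OF prevl_in_range[OF k]] by blast
qed

lemma admissible_ring_T3:
  assumes I: "I \<subseteq> {1..n}" and k: "k \<in> {1..n}" and "k \<notin> I"
    and ring: "admissible_ring n I (Box i # Ball k # rest)"
  shows "admissible_ring n I (Ball k # Box i # rest)"
proof -
  have "admissible_ring n I ((Ball k # rest) @ [Box i])"
    using ring admissible_ring_rotate_iff[of n I 1 "Box i # Ball k # rest"] by simp
  then obtain Cs where Cs: "length Cs = n" "admissible_gaps n I k Cs"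
    "(Ball k # rest) @ [Box i] = blocks n k Cs"
    using admissible_ring_at_Ball by (metis append_Cons nth_Cons_0)
  obtain Ds D where DsD: "Cs = Ds @ [D @ [Box i]]" "Ball k # rest = blocks n k (Ds @ [D])"
    by (rule eq_blocks_snoc_BoxE[OF Cs(3)])
  have len: "length (Ds @ [D]) = n"
    using Cs(1) DsD(1) by simp
  obtain C Cs' where CCs': "Ds @ [D] = C # Cs'"
    by (cases "Ds @ [D]") auto
  have "admissible_gaps n I k (C # Cs')" "admissible_box n I (prevl n k) (Box i)"
    using admissible_gaps_snoc[OF len k] Cs(2) DsD(1) CCs' by simp_all
  then have "admissible_gaps n I k ((Box i # C) # Cs')"
    using admissible_box_shift_forward[OF I k \<open>k \<notin> I\<close>] by simp
  moreover have "length ((Box i # C) # Cs') = n"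
    using len CCs' by simp
  moreover have word: "Ball k # Box i # rest = blocks n k ((Box i # C) # Cs')"
    using DsD(2) CCs' by simp
  ultimately show ?thesis
    unfolding word using admissible_ring_blocks[OF k] by blast
qed

lemma admissible_ring_T4:
  assumes I: "I \<subseteq> {1..n}" and k: "k \<in> {1..n}" and "k \<notin> I" and C: "\<forall>x\<in>set C. is_box x"
    and ring: "admissible_ring n I (Box k # Ball k # C @ Ball (nextl n k) # rest)"
  shows "admissible_ring n I (Ball k # C @ Box (nextl n k) # Ball (nextl n k) # rest)"
proof -
  let ?q = "nextl n k"
  have "admissible_ring n I ((Ball k # C @ Ball ?q # rest) @ [Box k])"
    using ring admissible_ring_rotate_iff[of n I 1 "Box k # Ball k # C @ Ball ?q # rest"] by simp
  then obtain Cs where Cs: "length Cs = n" "admissible_gaps n I k Cs"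
    "(Ball k # C @ Ball ?q # rest) @ [Box k] = blocks n k Cs"
    using admissible_ring_at_Ball by (metis append_Cons nth_Cons_0)
  obtain Ds D where DsD: "Cs = Ds @ [D @ [Box k]]" "Ball k # C @ Ball ?q # rest = blocks n k (Ds @ [D])"
    by (rule eq_blocks_snoc_BoxE[OF Cs(3)])
  have len: "length (Ds @ [D]) = n"
    using Cs(1) DsD(1) by simp
  have gaps: "admissible_gaps n I k (Ds @ [D])" "admissible_box n I (prevl n k) (Box k)"
    using admissible_gaps_snoc[OF len k] Cs(2) DsD(1) by simp_all
  then have "I = {}"
    using admissible_box_before_own_ball[OF I k] \<open>k \<notin> I\<close> by blast
  obtain Cs' where Cs': "Ds @ [D] = C # Cs'" "Ball ?q # rest = blocks n ?q Cs'"
    by (rule eq_blocks_gap_BallE[OF admissible_gaps_imp_box_gaps[OF gaps(1)] C DsD(2)])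
  have "box_gaps n (C # Cs')"
    using admissible_gaps_imp_box_gaps[OF gaps(1)] Cs'(1) by simp
  then have "box_gaps n ((C @ [Box ?q]) # Cs')"
    using nextl_in_range[OF k] by (auto simp: box_gaps_def)
  then have "admissible_gaps n I k ((C @ [Box ?q]) # Cs')"
    using \<open>I = {}\<close> by (simp only: admissible_gaps_empty_iff)
  moreover have "length ((C @ [Box ?q]) # Cs') = n"
    using len Cs'(1) by simp
  moreover have word: "Ball k # C @ Box ?q # Ball ?q # rest = blocks n k ((C @ [Box ?q]) # Cs')"
    using Cs'(2) by simp
  ultimately show ?thesis
    unfolding word using admissible_ring_blocks[OF k] by blast
qed

lemma length_replace_seg: "length (replace_seg w s ys) = length w"
  by (simp add: replace_seg_def)

lemma rotate_replace_seg:
  assumes seg: "is_seg w s xs" and len: "length ys = length xs"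
  shows "rotate s w = xs @ drop (length xs) (rotate s w)"
    and "rotate s (replace_seg w s ys) = ys @ drop (length xs) (rotate s w)"
proof -
  have s: "s < length w" "length xs \<le> length w" "0 < length w"
    using seg by (auto simp: is_seg_def)
  have "take (length xs) (rotate s w) = xs"
    using seg s by (intro nth_equalityI) (auto simp: is_seg_def nth_rotate)
  then show "rotate s w = xs @ drop (length xs) (rotate s w)"
    by (metis append_take_drop_id)
  show "rotate s (replace_seg w s ys) = ys @ drop (length xs) (rotate s w)"
  proof (rule nth_equalityI)
    fix j assume "j < length (rotate s (replace_seg w s ys))"
    then have j: "j < length w"
      by (simp add: length_replace_seg)
    have "((s + j) mod length w + length w - s) mod length w = j"
      using add_mod_diff_cancel[OF s(1) j] .
    then have "replace_seg w s ys ! ((s + j) mod length w) =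
        (if j < length ys then ys ! j else w ! ((s + j) mod length w))"
      using j s(3) unfolding replace_seg_def by (simp add: Let_def)
    then show "rotate s (replace_seg w s ys) ! j = (ys @ drop (length xs) (rotate s w)) ! j"
      using j len s by (simp add: nth_rotate length_replace_seg nth_append)
  qed (use len s in \<open>simp add: length_replace_seg\<close>)
qed

lemma admissible_ring_replace_seg:
  assumes "is_seg w s xs" "length ys = length xs" "admissible_ring n I w"
    and "\<And>rest. admissible_ring n I (xs @ rest) \<Longrightarrow> admissible_ring n I (ys @ rest)"
  shows "admissible_ring n I (replace_seg w s ys)"
proof -
  have "admissible_ring n I (xs @ drop (length xs) (rotate s w))"
    using assms(3) rotate_replace_seg(1)[OF assms(1,2)] admissible_ring_rotate_iff by metis
  then have "admissible_ring n I (rotate s (replace_seg w s ys))"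
    using assms(4) rotate_replace_seg(2)[OF assms(1,2)] by simp
  then show ?thesis
    by (simp only: admissible_ring_rotate_iff)
qed

lemma OmegaI_replace_seg:
  assumes "1 \<le> n" "w \<in> OmegaI L n I" "is_seg w s xs" "length ys = length xs"
    and "\<forall>rest. admissible_ring n I (xs @ rest) \<longrightarrow> admissible_ring n I (ys @ rest)"
  shows "replace_seg w s ys \<in> OmegaI L n I"
  using assms admissible_ring_replace_seg OmegaI_iff_admissible_ring[OF assms(1)]
  by (simp add: length_replace_seg)

theorem lemma5p4:
  fixes n L :: nat and I :: "nat set" and w w' :: "letter list"
  assumes "1 \<le> n" and "n \<le> L" and "I \<subseteq> {1..n}"
    and "w \<in> OmegaI L n I"
    and "(\<exists>k. T1 n k w w' \<or> T2 n k w w') \<or> (\<exists>k. k \<notin> I \<and> (T3 n k w w' \<or> T4 n k w w'))"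
  shows "w' \<in> OmegaI L n I"
  using assms(5)
proof (elim disjE exE conjE)
  fix k assume "T1 n k w w'"
  then show ?thesis
    unfolding T1_def using admissible_ring_T1[OF assms(3)]
    by (auto intro!: OmegaI_replace_seg[OF assms(1,4)])
next
  fix k assume "T2 n k w w'"
  then show ?thesis
    unfolding T2_def using admissible_ring_T2[OF assms(3)]
    by (auto intro!: OmegaI_replace_seg[OF assms(1,4)])
next
  fix k assume "k \<notin> I" "T3 n k w w'"
  then show ?thesis
    unfolding T3_def using admissible_ring_T3[OF assms(3)]
    by (auto intro!: OmegaI_replace_seg[OF assms(1,4)])
next
  fix k assume "k \<notin> I" "T4 n k w w'"
  then show ?thesis
    unfolding T4_def using admissible_ring_T4[OF assms(3)]
    by (auto intro!: OmegaI_replace_seg[OF assms(1,4)])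
qed

end
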